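(* Let $n\ge 2$, $k\ge 1$, $m=2n+k$. Let $\tau,\rho$ be the automorphisms of $SG_{n,k}$ given by $\tau S=S+1$ and $\rho S=k-S$ (elementwise, arithmetic modulo $m$), and let $\bar\tau,\bar\rho$ be the automorphisms of $K_{k+2}$ given by $\bar\tau x=x+1$ and $\bar\rho x=k-x$ (arithmetic modulo $k+2$). Let $c\colon SG_{n,k}\to K_{k+2}$ be the canonical colouring. Then $c\circ\tau\sim\bar\tau\circ c$ and $c\circ\rho\sim\bar\rho\circ c$.
   Context: A subset $S\subseteq\{0,\dots,m-1\}$ is stable if $\{i,i+1\}\not\subseteq S$ for all $0\le i\le m-2$ and $\{0,m-1\}\not\subseteq S$. The stable Kneser graph $SG_{n,k}$ has as vertices the stable $n$-element subsets of $\{0,\dots,m-1\}$, two being adjacent iff they are disjoint. $K_{k+2}$ is the loopless complete graph on $\{0,\dots,k+1\}$; the canonical colouring is $c(S)=\min S$ (with $S\subseteq\{0,\dots,m-1\}$ viewed as integers). For graphs $G,H$ and maps $f,g\colon V(G)\to V(H)$, $f\sim g$ means $(f(u),g(v))\in E(H)$ for all edges $(u,v)$ of $G$ (edges are ordered pairs of a symmetric relation). *)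

theory Defs
  imports Main
begin

definition stable :: "nat \<Rightarrow> nat set \<Rightarrow> bool" where
  "stable m S \<longleftrightarrow> S \<subseteq> {..<m}
     \<and> (\<forall>i. i + 1 < m \<longrightarrow> \<not> {i, i + 1} \<subseteq> S)
     \<and> \<not> {0, m - 1} \<subseteq> S"

definition SG_verts :: "nat \<Rightarrow> nat \<Rightarrow> nat set set" where
  "SG_verts n k = {S. stable (2*n + k) S \<and> card S = n}"

definition SG_edges :: "nat \<Rightarrow> nat \<Rightarrow> (nat set \<times> nat set) set" where
  "SG_edges n k = {(S, T). S \<in> SG_verts n k \<and> T \<in> SG_verts n k \<and> S \<inter> T = {}}"

definition K_edges :: "nat \<Rightarrow> (nat \<times> nat) set" where
  "K_edges k = {(x, y). x \<le> k + 1 \<and> y \<le> k + 1 \<and> x \<noteq> y}"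

definition canon_col :: "nat set \<Rightarrow> nat" where
  "canon_col S = Min S"

text \<open>f ~ g : (f u, g v) is an edge of H for every edge (u,v) of G.\<close>
definition hom_rel :: "('a \<times> 'a) set \<Rightarrow> ('b \<times> 'b) set \<Rightarrow> ('a \<Rightarrow> 'b) \<Rightarrow> ('a \<Rightarrow> 'b) \<Rightarrow> bool" where
  "hom_rel EG EH f g \<longleftrightarrow> (\<forall>(u, v) \<in> EG. (f u, g v) \<in> EH)"

definition tau :: "nat \<Rightarrow> nat \<Rightarrow> nat set \<Rightarrow> nat set" where
  "tau n k S = (\<lambda>x. nat ((int x + 1) mod int (2*n + k))) ` S"

definition rho :: "nat \<Rightarrow> nat \<Rightarrow> nat set \<Rightarrow> nat set" where
  "rho n k S = (\<lambda>x. nat ((int k - int x) mod int (2*n + k))) ` S"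

definition tau_bar :: "nat \<Rightarrow> nat \<Rightarrow> nat" where
  "tau_bar k x = nat ((int x + 1) mod int (k + 2))"

definition rho_bar :: "nat \<Rightarrow> nat \<Rightarrow> nat" where
  "rho_bar k x = nat ((int k - int x) mod int (k + 2))"

end

theory Submission
  imports Defs
begin

text \<open>
  A stable set contains no two consecutive integers, so S and S + 1 are disjoint and an
  n-element stable set does not fit into an interval of length 2n - 2. Consequently a vertex S of
  SG_{n,k} has Min S \<le> k + 1, and Min S = k + 1 forces m - 1 \<in> S. This determines the minima
  of the images: Min (tau S) is 0 if m - 1 \<in> S and Min S + 1 otherwise, while Min (rho S) is
  k - max (S \<inter> {0..k}) if that set is nonempty and k + 1 otherwise. For adjacent S and T the two
  colours in question are then distinct because S and T are disjoint, and the case m - 1 \<in> S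
  (resp. S \<inter> {0..k} = {}) excludes Min T = k + 1.
\<close>

lemma Max_filter_mem:
  assumes "finite S" and "\<exists>x\<in>S. P x"
  shows "Max {x\<in>S. P x} \<in> S" and "P (Max {x\<in>S. P x})"
proof -
  have "Max {x\<in>S. P x} \<in> {x\<in>S. P x}" using assms by (intro Max_in) auto
  then show "Max {x\<in>S. P x} \<in> S" and "P (Max {x\<in>S. P x})" by auto
qed

lemma card_le_if_no_consecutive:
  assumes "S \<subseteq> {a..<a + L}" and "\<And>i. i \<in> S \<Longrightarrow> Suc i \<notin> S"
  shows "2 * card S \<le> L + 1"
proof -
  have fin: "finite S" using assms(1) finite_subset by blast
  have "card (S \<union> Suc ` S) \<le> card {a..<a + L + 1}"
    using assms(1) by (intro card_mono) auto
  moreover have "S \<inter> Suc ` S = {}" using assms(2) by blast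
  then have "card (S \<union> Suc ` S) = 2 * card S"
    using fin by (simp add: card_Un_disjoint card_image)
  ultimately show ?thesis by simp
qed

lemma stable_no_consecutive:
  assumes "stable m S" and "i \<in> S"
  shows "Suc i \<notin> S"
proof
  assume "Suc i \<in> S"
  with assms have "{i, i + 1} \<subseteq> S" and "i + 1 < m" by (auto simp: stable_def)
  with assms(1) show False by (auto simp: stable_def)
qed

lemma SG_vert_subset: "S \<in> SG_verts n k \<Longrightarrow> S \<subseteq> {..<2 * n + k}"
  unfolding SG_verts_def stable_def by blast

lemma SG_vert_finite: "S \<in> SG_verts n k \<Longrightarrow> finite S"
  by (rule finite_subset[OF SG_vert_subset]) simp_all

lemma SG_vert_nonempty: "S \<in> SG_verts n k \<Longrightarrow> n \<ge> 1 \<Longrightarrow> S \<noteq> {}"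
  by (auto simp: SG_verts_def)

lemma Min_in_SG_vert: "S \<in> SG_verts n k \<Longrightarrow> n \<ge> 1 \<Longrightarrow> Min S \<in> S"
  using SG_vert_finite SG_vert_nonempty by (rule Min_in)

lemma SG_vert_not_subset_short_interval:
  assumes "S \<in> SG_verts n k" and "n \<ge> 1"
  shows "\<not> S \<subseteq> {a..<a + (2 * n - 2)}"
proof
  assume "S \<subseteq> {a..<a + (2 * n - 2)}"
  moreover have "\<And>i. i \<in> S \<Longrightarrow> Suc i \<notin> S"
    using assms(1) by (auto simp: SG_verts_def dest: stable_no_consecutive)
  ultimately have "2 * card S \<le> 2 * n - 2 + 1" by (rule card_le_if_no_consecutive)
  moreover have "card S = n" using assms(1) by (simp add: SG_verts_def)
  ultimately show False using assms(2) by linarith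
qed

lemma SG_vert_Min_le:
  assumes S: "S \<in> SG_verts n k" and n: "n \<ge> 1"
  shows "Min S \<le> k + 1"
proof (rule ccontr)
  assume "\<not> Min S \<le> k + 1"
  then have "S \<subseteq> {k + 2..<(k + 2) + (2 * n - 2)}"
    using SG_vert_subset[OF S] Min_le[OF SG_vert_finite[OF S]] n by fastforce
  then show False using SG_vert_not_subset_short_interval[OF S n] by blast
qed

lemma SG_vert_last_if_Min_eq:
  assumes S: "S \<in> SG_verts n k" and n: "n \<ge> 1" and "Min S = k + 1"
  shows "2 * n + k - 1 \<in> S"
proof (rule ccontr)
  assume "2 * n + k - 1 \<notin> S"
  have "S \<subseteq> {k + 1..<(k + 1) + (2 * n - 2)}"
  proof
    fix x assume "x \<in> S"
    then have "k + 1 \<le> x" and "x < 2 * n + k"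
      using SG_vert_subset[OF S] Min_le[OF SG_vert_finite[OF S]] assms(3) by auto
    with \<open>x \<in> S\<close> \<open>2 * n + k - 1 \<notin> S\<close> n show "x \<in> {k + 1..<(k + 1) + (2 * n - 2)}"
      by (cases "x = 2 * n + k - 1") auto
  qed
  then show False using SG_vert_not_subset_short_interval[OF S n] by blast
qed

lemma nat_succ_mod:
  assumes "x < m"
  shows "nat ((int x + 1) mod int m) = (if x = m - 1 then 0 else Suc x)"
proof (cases "x = m - 1")
  case True
  with assms have "int x + 1 = int m" by linarith
  with True show ?thesis by simp
next
  case False
  with assms show ?thesis by (simp add: nat_add_distrib)
qed

lemma nat_reflect_mod:
  assumes "x < m" and "k < m"
  shows "nat ((int k - int x) mod int m) = (if x \<le> k then k - x else m + k - x)"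
proof (cases "x \<le> k")
  case True
  with assms show ?thesis by simp
next
  case False
  have "(int k - int x) mod int m = (int k - int x + int m) mod int m" by simp
  also have "\<dots> = int k - int x + int m" using assms False by (intro mod_pos_pos_trivial) auto
  finally show ?thesis using assms False by simp
qed

lemma tau_bar_eq: "x \<le> k + 1 \<Longrightarrow> tau_bar k x = (if x = k + 1 then 0 else Suc x)"
  unfolding tau_bar_def using nat_succ_mod[of x "k + 2"] by simp

lemma rho_bar_eq: "x \<le> k + 1 \<Longrightarrow> rho_bar k x = (if x \<le> k then k - x else k + 1)"
  unfolding rho_bar_def using nat_reflect_mod[of x "k + 2" k] by (cases "x \<le> k") auto

lemma tau_eq_image:
  assumes "S \<subseteq> {..<2 * n + k}"
  shows "tau n k S = (\<lambda>x. if x = 2 * n + k - 1 then 0 else Suc x) ` S"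
  unfolding tau_def using assms by (intro image_cong refl nat_succ_mod) auto

lemma rho_eq_image:
  assumes "S \<subseteq> {..<2 * n + k}" and "n \<ge> 1"
  shows "rho n k S = (\<lambda>x. if x \<le> k then k - x else 2 * n + k + k - x) ` S"
  unfolding rho_def using assms by (intro image_cong refl nat_reflect_mod) auto

lemma Min_tau:
  assumes S: "S \<in> SG_verts n k" and n: "n \<ge> 1"
  shows "Min (tau n k S) = (if 2 * n + k - 1 \<in> S then 0 else Suc (Min S))"
proof (cases "2 * n + k - 1 \<in> S")
  case True
  have "finite (tau n k S)" using SG_vert_finite[OF S] by (simp add: tau_def)
  moreover have "0 \<in> tau n k S"
    using True unfolding tau_eq_image[OF SG_vert_subset[OF S]] by force
  ultimately show ?thesis using True by (intro Min_eqI) simp_all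
next
  case False
  then have "tau n k S = Suc ` S"
    unfolding tau_eq_image[OF SG_vert_subset[OF S]] by (intro image_cong) auto
  with False show ?thesis
    using mono_Min_commute[OF mono_Suc SG_vert_finite[OF S] SG_vert_nonempty[OF S n]] by simp
qed

lemma Min_rho:
  assumes S: "S \<in> SG_verts n k" and n: "n \<ge> 1"
  shows "Min (rho n k S) = (if \<exists>x\<in>S. x \<le> k then k - Max {x\<in>S. x \<le> k} else k + 1)"
proof -
  let ?m = "2 * n + k"
  have fin: "finite (rho n k S)" using SG_vert_finite[OF S] by (simp add: rho_def)
  have img: "rho n k S = (\<lambda>x. if x \<le> k then k - x else ?m + k - x) ` S"
    by (rule rho_eq_image[OF SG_vert_subset[OF S] n])
  have lt: "x < ?m" if "x \<in> S" for x using SG_vert_subset[OF S] that by blast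
  show ?thesis
  proof (cases "\<exists>x\<in>S. x \<le> k")
    case True
    define a where "a = Max {x\<in>S. x \<le> k}"
    have finA: "finite {x\<in>S. x \<le> k}" using SG_vert_finite[OF S] by simp
    have a: "a \<in> S" "a \<le> k"
      unfolding a_def using Max_filter_mem[OF SG_vert_finite[OF S] True] by auto
    have a_max: "x \<le> a" if "x \<in> S" "x \<le> k" for x
      unfolding a_def using finA that by (intro Max_ge) auto
    have "Min (rho n k S) = k - a"
    proof (rule Min_eqI[OF fin])
      show "k - a \<in> rho n k S" unfolding img using a by force
      fix y assume "y \<in> rho n k S"
      then obtain x where x: "x \<in> S" "y = (if x \<le> k then k - x else ?m + k - x)"
        unfolding img by blast
      show "k - a \<le> y"
      proof (cases "x \<le> k")
        case True
        with x a_max[OF x(1)] show ?thesis by simp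
      next
        case False
        with x lt[OF x(1)] show ?thesis by simp
      qed
    qed
    with True show ?thesis unfolding a_def by simp
  next
    case False
    with Min_in_SG_vert[OF S n] SG_vert_Min_le[OF S n] have "Min S = k + 1" by fastforce
    then have last: "?m - 1 \<in> S" by (rule SG_vert_last_if_Min_eq[OF S n])
    have "Min (rho n k S) = k + 1"
    proof (rule Min_eqI[OF fin])
      show "k + 1 \<in> rho n k S"
        unfolding img using last n by (intro image_eqI[where x = "?m - 1"]) auto
      fix y assume "y \<in> rho n k S"
      then obtain x where x: "x \<in> S" "y = (if x \<le> k then k - x else ?m + k - x)"
        unfolding img by blast
      with False lt[OF x(1)] show "k + 1 \<le> y" by auto
    qed
    with False show ?thesis by simp
  qed
qed

lemma SG_edge_props:
  assumes "(S, T) \<in> SG_edges n k"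
  shows "S \<in> SG_verts n k" "T \<in> SG_verts n k" "S \<inter> T = {}"
  using assms by (auto simp: SG_edges_def)

lemma tau_edge:
  assumes e: "(S, T) \<in> SG_edges n k" and n: "n \<ge> 1"
  shows "(Min (tau n k S), tau_bar k (Min T)) \<in> K_edges k"
proof -
  note S = SG_edge_props(1)[OF e] and T = SG_edge_props(2)[OF e]
    and disj = SG_edge_props(3)[OF e]
  have T_le: "Min T \<le> k + 1" by (rule SG_vert_Min_le[OF T n])
  show ?thesis
  proof (cases "2 * n + k - 1 \<in> S")
    case True
    then have "Min T \<noteq> k + 1" using SG_vert_last_if_Min_eq[OF T n] disj by blast
    then have "tau_bar k (Min T) = Suc (Min T)" by (simp add: tau_bar_eq[OF T_le])
    moreover have "Min (tau n k S) = 0" using True by (simp add: Min_tau[OF S n])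
    ultimately show ?thesis using T_le \<open>Min T \<noteq> k + 1\<close> by (simp add: K_edges_def)
  next
    case False
    then have "Min S \<noteq> k + 1" using SG_vert_last_if_Min_eq[OF S n] by blast
    then have "Min (tau n k S) = Suc (Min S)" and "Min S \<le> k"
      using False SG_vert_Min_le[OF S n] by (simp_all add: Min_tau[OF S n])
    moreover have "Min S \<noteq> Min T"
      using Min_in_SG_vert[OF S n] Min_in_SG_vert[OF T n] disj by (metis disjoint_iff)
    ultimately show ?thesis using T_le by (auto simp: tau_bar_eq K_edges_def)
  qed
qed

lemma rho_edge:
  assumes e: "(S, T) \<in> SG_edges n k" and n: "n \<ge> 1"
  shows "(Min (rho n k S), rho_bar k (Min T)) \<in> K_edges k"
proof -
  note S = SG_edge_props(1)[OF e] and T = SG_edge_props(2)[OF e]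
    and disj = SG_edge_props(3)[OF e]
  have T_le: "Min T \<le> k + 1" by (rule SG_vert_Min_le[OF T n])
  show ?thesis
  proof (cases "\<exists>x\<in>S. x \<le> k")
    case True
    define a where "a = Max {x\<in>S. x \<le> k}"
    have "a \<in> S" "a \<le> k"
      unfolding a_def using Max_filter_mem[OF SG_vert_finite[OF S] True] by auto
    moreover have "a \<noteq> Min T" using \<open>a \<in> S\<close> Min_in_SG_vert[OF T n] disj by (metis disjoint_iff)
    ultimately show ?thesis using True T_le
      by (auto simp: Min_rho[OF S n] rho_bar_eq K_edges_def a_def[symmetric])
  next
    case False
    then have "Min S = k + 1"
      using Min_in_SG_vert[OF S n] SG_vert_Min_le[OF S n] by fastforce
    then have "Min T \<noteq> k + 1"
      using Min_in_SG_vert[OF S n] Min_in_SG_vert[OF T n] disj by (metis disjoint_iff)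
    with False T_le show ?thesis by (auto simp: Min_rho[OF S n] rho_bar_eq K_edges_def)
  qed
qed

theorem lemma4p5:
  fixes n k :: nat
  assumes "n \<ge> 2" and "k \<ge> 1"
  shows "hom_rel (SG_edges n k) (K_edges k) (canon_col \<circ> tau n k) (tau_bar k \<circ> canon_col)
       \<and> hom_rel (SG_edges n k) (K_edges k) (canon_col \<circ> rho n k) (rho_bar k \<circ> canon_col)"
proof -
  have n: "n \<ge> 1" using assms(1) by simp
  show ?thesis unfolding hom_rel_def canon_col_def
    using tau_edge[OF _ n] rho_edge[OF _ n] by auto
qed

end
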